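(* Let $d\ge1$, let $\Lambda\subset\mathbb{R}^{2d}$ be a lattice, let $g\in L^2(\mathbb{R}^d)$ be such that $(g,\Lambda)$ induces a frame with frame constants $A,B>0$, and let $\Omega\subset\mathbb{R}^{2d}$ be compact. Then $$\Vert\rho_\Omega-\chi_\Omega\Vert_{\ell^1(\Lambda)}\le\frac{2}{\Vert g\Vert_{L^2}^2}\Big(\#(\Omega\cap\Lambda)\Vert g\Vert_{L^2}^2-\sum_{k=1}^{A_\Omega}\lambda_k^\Omega\Big)+\frac{B}{\Vert g\Vert_{L^2}^2}.$$
   Context: For $z=(x,\omega)\in\mathbb{R}^{2d}$ the time-frequency shift $\pi(z)$ acts on $L^2(\mathbb{R}^d)$ by $\pi(x,\omega)f(t)=e^{2\pi i\omega\cdot t}f(t-x)$, and $V_gf(z)=\langle f,\pi(z)g\rangle$. A lattice is $\Lambda=M\mathbb{Z}^{2d}$ with $M$ an invertible real $2d\times2d$ matrix. $(g,\Lambda)$ induces a frame with frame constants $A,B>0$ if $A\Vert f\Vert_{L^2}^2\le\sum_{\lambda\in\Lambda}|\langle f,\pi(\lambda)g\rangle|^2\le B\Vert f\Vert_{L^2}^2$ for all $f\in L^2(\mathbb{R}^d)$. For compact $\Omega$ the Gabor multiplier is $G^g_{\Omega,\Lambda}f=\sum_{\lambda\in\Lambda}\chi_\Omega(\lambda)V_gf(\lambda)\pi(\lambda)g$; it is a finite-rank positive self-adjoint operator with eigendecomposition $G^g_{\Omega,\Lambda}=\sum_{k=1}^\infty\lambda_k^\Omega\langle\cdot,h_k^\Omega\rangle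 h_k^\Omega$, where $(h_k^\Omega)_{k\ge1}$ is an orthonormal basis of $L^2(\mathbb{R}^d)$ and $\lambda_1^\Omega\ge\lambda_2^\Omega\ge\dots\ge0$. The accumulated spectrogram is $\rho_\Omega(\lambda)=\frac{1}{\Vert g\Vert_{L^2}^2}\sum_{k=1}^{A_\Omega}|V_gh_k^\Omega(\lambda)|^2$ for $\lambda\in\Lambda$, with $A_\Omega=\left\lceil\frac{\#(\Omega\cap\Lambda)\Vert g\Vert_{L^2}^2}{B}\right\rceil$. $\#$ denotes cardinality and $\Vert c\Vert_{\ell^1(\Lambda)}=\sum_{\lambda\in\Lambda}|c(\lambda)|$. *)

theory Defs
  imports "HOL-Analysis.Analysis"
begin

text \<open>Functions on R^d are modelled as complex-valued functions on real^'d
  (the finite type 'd has cardinality d, automatically d >= 1). Phase space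
  R^{2d} is (real^'d) \<times> (real^'d), with z = (x, omega). L^2 membership is
  Lebesgue measurability plus square integrability; elements of L^2 are
  compared up to the L^2 (semi)norm.\<close>

definition in_L2 :: "(real^'d \<Rightarrow> complex) \<Rightarrow> bool" where
  "in_L2 f \<longleftrightarrow> f \<in> borel_measurable lborel \<and> integrable lborel (\<lambda>t. (cmod (f t))\<^sup>2)"

definition L2_inner :: "(real^'d \<Rightarrow> complex) \<Rightarrow> (real^'d \<Rightarrow> complex) \<Rightarrow> complex" where
  "L2_inner f h = (LINT t|lborel. f t * cnj (h t))"

definition L2_norm :: "(real^'d \<Rightarrow> complex) \<Rightarrow> real" where
  "L2_norm f = sqrt (LINT t|lborel. (cmod (f t))\<^sup>2)"

definition tf_shift :: "(real^'d) \<times> (real^'d) \<Rightarrow> (real^'d \<Rightarrow> complex) \<Rightarrow> (real^'d \<Rightarrow> complex)" where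
  "tf_shift z f = (\<lambda>t. cis (2 * pi * (snd z \<bullet> t)) * f (t - fst z))"

definition STFT :: "(real^'d \<Rightarrow> complex) \<Rightarrow> (real^'d \<Rightarrow> complex) \<Rightarrow> (real^'d) \<times> (real^'d) \<Rightarrow> complex" where
  "STFT g f z = L2_inner f (tf_shift z g)"

definition int_points :: "((real^'d) \<times> (real^'d)) set" where
  "int_points = {(a, b). (\<forall>i. a $ i \<in> \<int>) \<and> (\<forall>i. b $ i \<in> \<int>)}"

definition is_lattice :: "((real^'d) \<times> (real^'d)) set \<Rightarrow> bool" where
  "is_lattice L \<longleftrightarrow> (\<exists>M :: (real^'d) \<times> (real^'d) \<Rightarrow> (real^'d) \<times> (real^'d). linear M \<and> bij M \<and> L = M ` int_points)"

definition gabor_frame :: "(real^'d \<Rightarrow> complex) \<Rightarrow> ((real^'d) \<times> (real^'d)) set \<Rightarrow> real \<Rightarrow> real \<Rightarrow> bool" where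
  "gabor_frame g L A B \<longleftrightarrow> A > 0 \<and> B > 0 \<and>
     (\<forall>f. in_L2 f \<longrightarrow>
        (\<lambda>l. (cmod (STFT g f l))\<^sup>2) summable_on L \<and>
        A * (L2_norm f)\<^sup>2 \<le> (\<Sum>\<^sub>\<infinity>l\<in>L. (cmod (STFT g f l))\<^sup>2) \<and>
        (\<Sum>\<^sub>\<infinity>l\<in>L. (cmod (STFT g f l))\<^sup>2) \<le> B * (L2_norm f)\<^sup>2)"

text \<open>Gabor multiplier: sum over lambda in Lambda of chi_Omega(lambda) V_g f(lambda) pi(lambda) g;
  only the (finitely many) lattice points in Omega contribute.\<close>
definition gabor_mult :: "(real^'d \<Rightarrow> complex) \<Rightarrow> ((real^'d) \<times> (real^'d)) set \<Rightarrow> ((real^'d) \<times> (real^'d)) set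
     \<Rightarrow> (real^'d \<Rightarrow> complex) \<Rightarrow> (real^'d \<Rightarrow> complex)" where
  "gabor_mult g Om L f = (\<lambda>t. \<Sum>l\<in>Om \<inter> L. STFT g f l * tf_shift l g t)"

text \<open>Orthonormal basis of L^2 (indexed by nat, k = 0 corresponds to k = 1 in the paper).\<close>
definition L2_onb :: "(nat \<Rightarrow> real^'d \<Rightarrow> complex) \<Rightarrow> bool" where
  "L2_onb h \<longleftrightarrow> (\<forall>k. in_L2 (h k)) \<and>
     (\<forall>j k. L2_inner (h j) (h k) = (if j = k then 1 else 0)) \<and>
     (\<forall>f. in_L2 f \<longrightarrow>
        (\<lambda>n. L2_norm (\<lambda>t. f t - (\<Sum>k<n. L2_inner f (h k) * h k t))) \<longlonglongrightarrow> 0)"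

definition eigendecomp :: "((real^'d \<Rightarrow> complex) \<Rightarrow> (real^'d \<Rightarrow> complex)) \<Rightarrow> (nat \<Rightarrow> real)
     \<Rightarrow> (nat \<Rightarrow> real^'d \<Rightarrow> complex) \<Rightarrow> bool" where
  "eigendecomp G lam h \<longleftrightarrow> L2_onb h \<and> (\<forall>k. lam k \<ge> lam (Suc k)) \<and> (\<forall>k. lam k \<ge> 0) \<and>
     (\<forall>f. in_L2 f \<longrightarrow>
        (\<lambda>n. L2_norm (\<lambda>t. G f t - (\<Sum>k<n. complex_of_real (lam k) * L2_inner f (h k) * h k t))) \<longlonglongrightarrow> 0)"

definition A_Om :: "(real^'d \<Rightarrow> complex) \<Rightarrow> ((real^'d) \<times> (real^'d)) set \<Rightarrow> ((real^'d) \<times> (real^'d)) set \<Rightarrow> real \<Rightarrow> nat" where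
  "A_Om g Om L B = nat \<lceil>real (card (Om \<inter> L)) * (L2_norm g)\<^sup>2 / B\<rceil>"

definition acc_spec :: "(real^'d \<Rightarrow> complex) \<Rightarrow> (nat \<Rightarrow> real^'d \<Rightarrow> complex) \<Rightarrow> nat
     \<Rightarrow> (real^'d) \<times> (real^'d) \<Rightarrow> real" where
  "acc_spec g h N l = (1 / (L2_norm g)\<^sup>2) * (\<Sum>k<N. (cmod (STFT g (h k) l))\<^sup>2)"

end

theory Submission
  imports Defs
begin

(* Orthonormality of the h_k and Bessel's inequality for pi(lambda) g give 0 <= rho <= 1, hence
   |rho - chi| = rho + chi (1 - 2 rho) pointwise.  By the upper frame bound each |V_g h_k|^2 sums
   to at most B over the lattice, so the sum of rho is at most A_Om B / ||g||^2, which is at most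
   #(Om cap Lambda) + B / ||g||^2.  On the finite set Om cap Lambda, the sum of |V_g h_k|^2 is
   <G h_k, h_k> = lambda_k, so there rho sums to (lambda_1 + ... + lambda_{A_Om}) / ||g||^2. *)

section \<open>Square-integrable functions and Bessel's inequality\<close>

lemma borel_measurable_cnj [measurable]: "cnj \<in> borel_measurable borel"
  by (intro borel_measurable_continuous_onI continuous_intros)

lemma in_L2_measurable: "in_L2 f \<Longrightarrow> f \<in> borel_measurable lborel"
  by (simp add: in_L2_def)

lemma in_L2_integrable_square: "in_L2 f \<Longrightarrow> integrable lborel (\<lambda>t. (cmod (f t))\<^sup>2)"
  by (simp add: in_L2_def)

lemma integrable_L2_product:
  assumes "in_L2 f" "in_L2 h"
  shows "integrable lborel (\<lambda>t. f t * cnj (h t))"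
proof (rule Bochner_Integration.integrable_bound)
  show "integrable lborel (\<lambda>t. (cmod (f t))\<^sup>2 + (cmod (h t))\<^sup>2)"
    using assms by (intro Bochner_Integration.integrable_add in_L2_integrable_square)
  have [measurable]: "f \<in> borel_measurable lborel" "h \<in> borel_measurable lborel"
    using assms in_L2_measurable by auto
  show "(\<lambda>t. f t * cnj (h t)) \<in> borel_measurable lborel"
    by measurable
  have "a * b \<le> a\<^sup>2 + b\<^sup>2" if "a \<ge> 0" "b \<ge> 0" for a b :: real
    using that sum_squares_bound[of a b] mult_nonneg_nonneg[OF that]
    unfolding power2_eq_square by linarith
  then show "AE t in lborel. norm (f t * cnj (h t)) \<le> norm ((cmod (f t))\<^sup>2 + (cmod (h t))\<^sup>2)"
    by (simp add: norm_mult)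
qed

lemma in_L2_add:
  assumes "in_L2 f" "in_L2 h"
  shows "in_L2 (\<lambda>t. f t + h t)"
  unfolding in_L2_def
proof
  have [measurable]: "f \<in> borel_measurable lborel" "h \<in> borel_measurable lborel"
    using assms in_L2_measurable by auto
  show "(\<lambda>t. f t + h t) \<in> borel_measurable lborel"
    by measurable
  show "integrable lborel (\<lambda>t. (cmod (f t + h t))\<^sup>2)"
  proof (rule Bochner_Integration.integrable_bound)
    show "integrable lborel (\<lambda>t. 2 * (cmod (f t))\<^sup>2 + 2 * (cmod (h t))\<^sup>2)"
      using assms by (intro Bochner_Integration.integrable_add
          Bochner_Integration.integrable_mult_right in_L2_integrable_square)
    show "(\<lambda>t. (cmod (f t + h t))\<^sup>2) \<in> borel_measurable lborel"
      by measurable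
    have "(cmod (a + b))\<^sup>2 \<le> 2 * (cmod a)\<^sup>2 + 2 * (cmod b)\<^sup>2" for a b :: complex
    proof -
      have "(cmod (a + b))\<^sup>2 \<le> (cmod a + cmod b)\<^sup>2"
        by (simp add: norm_triangle_ineq power_mono)
      also have "\<dots> \<le> 2 * (cmod a)\<^sup>2 + 2 * (cmod b)\<^sup>2"
        using sum_squares_bound[of "cmod a" "cmod b"] by (simp add: power2_sum)
      finally show ?thesis .
    qed
    then show "AE t in lborel. norm ((cmod (f t + h t))\<^sup>2) \<le> norm (2 * (cmod (f t))\<^sup>2 + 2 * (cmod (h t))\<^sup>2)"
      by simp
  qed
qed

lemma in_L2_mult_left:
  assumes "in_L2 f"
  shows "in_L2 (\<lambda>t. c * f t)"
  unfolding in_L2_def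
proof
  have [measurable]: "f \<in> borel_measurable lborel"
    using assms by (rule in_L2_measurable)
  show "(\<lambda>t. c * f t) \<in> borel_measurable lborel"
    by measurable
  have "integrable lborel (\<lambda>t. (cmod c)\<^sup>2 * (cmod (f t))\<^sup>2)"
    using assms by (intro Bochner_Integration.integrable_mult_right in_L2_integrable_square)
  then show "integrable lborel (\<lambda>t. (cmod (c * f t))\<^sup>2)"
    by (simp add: norm_mult power_mult_distrib)
qed

lemma in_L2_diff:
  assumes "in_L2 f" "in_L2 h"
  shows "in_L2 (\<lambda>t. f t - h t)"
  using in_L2_add[OF assms(1) in_L2_mult_left[OF assms(2), of "-1"]] by simp

lemma in_L2_sum:
  assumes "\<And>i. i \<in> I \<Longrightarrow> in_L2 (f i)"
  shows "in_L2 (\<lambda>t. \<Sum>i\<in>I. f i t)"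
  using assms
proof (induction I rule: infinite_finite_induct)
  case (insert i I)
  then show ?case by (simp add: in_L2_add)
qed (simp_all add: in_L2_def)

lemma in_L2_linear_combination:
  assumes "\<And>i. i \<in> I \<Longrightarrow> in_L2 (f i)"
  shows "in_L2 (\<lambda>t. \<Sum>i\<in>I. c i * f i t)"
  using assms by (intro in_L2_sum in_L2_mult_left)

lemma L2_inner_commute: "L2_inner h f = cnj (L2_inner f h)"
  unfolding L2_inner_def Bochner_Integration.integral_cnj[symmetric] by (simp add: mult.commute)

lemma L2_inner_self: "L2_inner f f = complex_of_real ((L2_norm f)\<^sup>2)"
  unfolding L2_inner_def L2_norm_def
  by (simp add: complex_norm_square[symmetric] integral_complex_of_real[symmetric]
      del: integral_complex_of_real)

lemma L2_inner_add_left: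
  assumes "in_L2 f1" "in_L2 f2" "in_L2 h"
  shows "L2_inner (\<lambda>t. f1 t + f2 t) h = L2_inner f1 h + L2_inner f2 h"
  unfolding L2_inner_def distrib_right
  by (rule Bochner_Integration.integral_add; intro integrable_L2_product assms)

lemma L2_inner_add_right:
  assumes "in_L2 h" "in_L2 f1" "in_L2 f2"
  shows "L2_inner h (\<lambda>t. f1 t + f2 t) = L2_inner h f1 + L2_inner h f2"
  using L2_inner_add_left[OF assms(2,3,1)] by (metis L2_inner_commute complex_cnj_add)

lemma L2_inner_mult_left: "L2_inner (\<lambda>t. c * f t) h = c * L2_inner f h"
  unfolding L2_inner_def by (simp add: mult.assoc)

lemma L2_inner_diff_left:
  assumes "in_L2 f1" "in_L2 f2" "in_L2 h"
  shows "L2_inner (\<lambda>t. f1 t - f2 t) h = L2_inner f1 h - L2_inner f2 h"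
proof -
  have "L2_inner (\<lambda>t. f1 t + (-1) * f2 t) h = L2_inner f1 h + L2_inner (\<lambda>t. (-1) * f2 t) h"
    using assms in_L2_mult_left by (intro L2_inner_add_left)
  then show ?thesis
    by (simp only: L2_inner_mult_left) simp
qed

lemma L2_inner_linear_combination_left:
  assumes "\<And>i. i \<in> I \<Longrightarrow> in_L2 (f i)" "in_L2 h"
  shows "L2_inner (\<lambda>t. \<Sum>i\<in>I. c i * f i t) h = (\<Sum>i\<in>I. c i * L2_inner (f i) h)"
proof -
  have "L2_inner (\<lambda>t. \<Sum>i\<in>I. c i * f i t) h = (\<Sum>i\<in>I. L2_inner (\<lambda>t. c i * f i t) h)"
    unfolding L2_inner_def sum_distrib_right
    using assms by (intro Bochner_Integration.integral_sum integrable_L2_product in_L2_mult_left)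
  then show ?thesis
    by (simp add: L2_inner_mult_left)
qed

lemma L2_inner_eq_0_if_L2_norm_eq_0:
  assumes "in_L2 f" "L2_norm f = 0"
  shows "L2_inner f h = 0"
proof -
  have "(LINT t|lborel. (cmod (f t))\<^sup>2) = 0"
    using assms(2) integral_nonneg_AE[of "\<lambda>t. (cmod (f t))\<^sup>2" lborel]
    by (simp add: L2_norm_def)
  then have "AE t in lborel. (cmod (f t))\<^sup>2 = 0"
    using integral_nonneg_eq_0_iff_AE[OF in_L2_integrable_square[OF assms(1)]] by simp
  then have "AE t in lborel. f t * cnj (h t) = 0"
    by eventually_elim simp
  then show ?thesis
    unfolding L2_inner_def by (rule integral_eq_zero_AE)
qed

definition L2_orthonormal :: "('i \<Rightarrow> real^'d \<Rightarrow> complex) \<Rightarrow> bool" where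
  "L2_orthonormal h \<longleftrightarrow> (\<forall>k. in_L2 (h k)) \<and> (\<forall>j k. L2_inner (h j) (h k) = (if j = k then 1 else 0))"

lemma L2_onb_imp_orthonormal: "L2_onb h \<Longrightarrow> L2_orthonormal h"
  by (simp add: L2_onb_def L2_orthonormal_def)

lemma L2_orthonormal_norm: "L2_orthonormal h \<Longrightarrow> L2_norm (h k) = 1"
  using L2_inner_self[of "h k"] by (simp add: L2_orthonormal_def L2_norm_def)

lemma L2_inner_orthonormal_expansion:
  assumes "L2_orthonormal h" "finite K" "j \<in> K"
  shows "L2_inner (\<lambda>t. \<Sum>k\<in>K. c k * h k t) (h j) = c j"
proof -
  have "L2_inner (\<lambda>t. \<Sum>k\<in>K. c k * h k t) (h j) = (\<Sum>k\<in>K. c k * (if k = j then 1 else 0))"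
    using assms(1) by (simp add: L2_orthonormal_def L2_inner_linear_combination_left)
  also have "\<dots> = c j"
    using assms(2,3) by (simp add: if_distrib cong: if_cong)
  finally show ?thesis .
qed

lemma L2_norm_add_orthogonal:
  assumes "in_L2 d" "in_L2 s" "L2_inner d s = 0"
  shows "(L2_norm (\<lambda>t. d t + s t))\<^sup>2 = (L2_norm d)\<^sup>2 + (L2_norm s)\<^sup>2"
proof -
  have "L2_inner s d = 0"
    using assms(3) by (subst L2_inner_commute) simp
  then have "L2_inner (\<lambda>t. d t + s t) (\<lambda>t. d t + s t) = L2_inner d d + L2_inner s s"
    using assms by (simp add: L2_inner_add_left L2_inner_add_right in_L2_add)
  then have "complex_of_real ((L2_norm (\<lambda>t. d t + s t))\<^sup>2) = complex_of_real ((L2_norm d)\<^sup>2 + (L2_norm s)\<^sup>2)"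
    by (simp only: L2_inner_self of_real_add)
  then show ?thesis
    by (simp only: of_real_eq_iff)
qed

lemma bessel_inequality:
  assumes "L2_orthonormal h" "finite K" "in_L2 f"
  shows "(\<Sum>k\<in>K. (cmod (L2_inner f (h k)))\<^sup>2) \<le> (L2_norm f)\<^sup>2"
proof -
  have h: "in_L2 (h k)" for k
    using assms(1) by (simp add: L2_orthonormal_def)
  define c where "c k = L2_inner f (h k)" for k
  define s where "s = (\<lambda>t. \<Sum>k\<in>K. c k * h k t)"
  define d where "d t = f t - s t" for t
  have s: "in_L2 s"
    unfolding s_def using h by (rule in_L2_linear_combination)
  have d: "in_L2 d"
    unfolding d_def using assms(3) s by (rule in_L2_diff)
  have s_h: "L2_inner s (h k) = c k" if "k \<in> K" for k
    unfolding s_def using L2_inner_orthonormal_expansion[OF assms(1,2) that] .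
  have "L2_inner d (h k) = 0" if "k \<in> K" for k
    unfolding d_def using s_h[OF that] by (simp add: L2_inner_diff_left assms(3) s h c_def)
  then have "L2_inner s d = 0"
    unfolding s_def using d h
    by (simp add: L2_inner_linear_combination_left L2_inner_commute[of "h _" d])
  then have "L2_inner d s = 0"
    by (subst L2_inner_commute) simp
  have "L2_inner s s = (\<Sum>k\<in>K. c k * L2_inner (h k) s)"
    using L2_inner_linear_combination_left[of K h s c] h s by (simp flip: s_def)
  also have "\<dots> = (\<Sum>k\<in>K. c k * cnj (c k))"
    using s_h by (simp add: L2_inner_commute[of "h _" s])
  finally have "L2_inner s s = (\<Sum>k\<in>K. c k * cnj (c k))" .
  then have "complex_of_real ((L2_norm s)\<^sup>2) = complex_of_real (\<Sum>k\<in>K. (cmod (c k))\<^sup>2)"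
    by (simp only: L2_inner_self of_real_sum complex_norm_square)
  then have "(L2_norm s)\<^sup>2 = (\<Sum>k\<in>K. (cmod (c k))\<^sup>2)"
    by (simp only: of_real_eq_iff)
  moreover have "(L2_norm f)\<^sup>2 = (L2_norm d)\<^sup>2 + (L2_norm s)\<^sup>2"
    using L2_norm_add_orthogonal[OF d s \<open>L2_inner d s = 0\<close>] by (simp add: d_def)
  ultimately show ?thesis
    by (simp add: c_def)
qed

section \<open>Time-frequency shifts\<close>

lemma lborel_integral_translate:
  fixes f :: "'a::euclidean_space \<Rightarrow> real"
  assumes "f \<in> borel_measurable lborel"
  shows "(LINT t|lborel. f (t - a)) = (LINT t|lborel. f t)"
    and "integrable lborel (\<lambda>t. f (t - a)) \<longleftrightarrow> integrable lborel f"
proof -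
  have f: "f \<in> borel_measurable borel"
    using assms by simp
  have T: "(+) (-a) \<in> measurable lborel borel"
    by simp
  have "(LINT t|lborel. f t) = integral\<^sup>L (distr lborel borel ((+) (-a))) f"
    by (simp add: lborel_distr_plus)
  also have "\<dots> = (LINT t|lborel. f (-a + t))"
    by (rule integral_distr[OF T f])
  finally show "(LINT t|lborel. f (t - a)) = (LINT t|lborel. f t)"
    by simp
  have "integrable lborel f \<longleftrightarrow> integrable (distr lborel borel ((+) (-a))) f"
    by (simp add: lborel_distr_plus)
  also have "\<dots> \<longleftrightarrow> integrable lborel (\<lambda>t. f (-a + t))"
    by (rule integrable_distr_eq[OF T f])
  finally show "integrable lborel (\<lambda>t. f (t - a)) \<longleftrightarrow> integrable lborel f"
    by simp
qed

lemma cmod_tf_shift: "cmod (tf_shift z g t) = cmod (g (t - fst z))"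
  by (simp add: tf_shift_def norm_mult)

lemma in_L2_tf_shift:
  assumes "in_L2 g"
  shows "in_L2 (tf_shift z g)"
  unfolding in_L2_def cmod_tf_shift
proof
  have [measurable]: "g \<in> borel_measurable borel"
    using assms in_L2_measurable by simp
  have [measurable]: "(\<lambda>t. cis (2 * pi * (snd z \<bullet> t))) \<in> borel_measurable borel"
    by (intro borel_measurable_continuous_onI continuous_intros)
  show "tf_shift z g \<in> borel_measurable lborel"
    unfolding tf_shift_def by measurable
  show "integrable lborel (\<lambda>t. (cmod (g (t - fst z)))\<^sup>2)"
    using lborel_integral_translate(2)[of "\<lambda>t. (cmod (g t))\<^sup>2"] assms
    by (simp add: in_L2_def)
qed

lemma L2_norm_tf_shift:
  assumes "in_L2 g"
  shows "L2_norm (tf_shift z g) = L2_norm g"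
proof -
  have [measurable]: "g \<in> borel_measurable borel"
    using assms in_L2_measurable by simp
  have "(\<lambda>t. (cmod (g t))\<^sup>2) \<in> borel_measurable lborel"
    by measurable
  from lborel_integral_translate(1)[OF this] show ?thesis
    by (simp add: L2_norm_def cmod_tf_shift)
qed

section \<open>Lattice points in a compact set\<close>

lemma int_vector_dist_ge_1:
  fixes a b :: "real^'n"
  assumes "\<forall>i. a $ i \<in> \<int>" "\<forall>i. b $ i \<in> \<int>" "a \<noteq> b"
  shows "1 \<le> dist a b"
proof -
  obtain i where i: "a $ i \<noteq> b $ i"
    using assms(3) by (auto simp: vec_eq_iff)
  have "a $ i - b $ i \<in> \<int>"
    using assms by auto
  then have "1 \<le> \<bar>(a - b) $ i\<bar>"
    using i by (intro Ints_nonzero_abs_ge1) auto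
  also have "\<dots> \<le> norm (a - b)"
    by (rule component_le_norm_cart)
  finally show ?thesis
    by (simp add: dist_norm)
qed

lemma uniform_discrete_int_points: "uniform_discrete int_points"
proof (rule uniformI2[of 1])
  fix p q :: "(real^'d) \<times> (real^'d)"
  assume "p \<in> int_points" "q \<in> int_points" "p \<noteq> q"
  then have "1 \<le> dist (fst p) (fst q) \<or> 1 \<le> dist (snd p) (snd q)"
    by (cases p, cases q) (auto simp: int_points_def intro: int_vector_dist_ge_1)
  then show "1 \<le> dist p q"
    using dist_fst_le[of p q] dist_snd_le[of p q] by linarith
qed simp

lemma finite_compact_inter_lattice:
  fixes K L :: "((real^'d) \<times> (real^'d)) set"
  assumes "is_lattice L" "compact K"
  shows "finite (K \<inter> L)"
proof -
  obtain M :: "(real^'d) \<times> (real^'d) \<Rightarrow> (real^'d) \<times> (real^'d)"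
    where M: "linear M" "bij M" "L = M ` int_points"
    using assms(1) unfolding is_lattice_def by blast
  have "bounded_linear (inv M)"
    using M by (intro inj_linear_imp_inv_bounded_linear) (auto simp: bij_is_inj linear_linear)
  then have "compact (inv M ` K)"
    using assms(2) by (intro compact_continuous_image linear_continuous_on)
  then have "bounded (inv M ` K \<inter> int_points)"
    by (rule bounded_subset[OF compact_imp_bounded]) auto
  moreover have "uniform_discrete (inv M ` K \<inter> int_points)"
    using uniform_discrete_int_points by (rule uniform_discrete_subset) auto
  ultimately have "finite (inv M ` K \<inter> int_points)"
    using uniform_discrete_finite_iff by blast
  moreover have "K \<inter> L \<subseteq> M ` (inv M ` K \<inter> int_points)"
  proof
    fix y
    assume "y \<in> K \<inter> L"
    then obtain p where "p \<in> int_points" "y = M p" "y \<in> K"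
      using M(3) by auto
    moreover have "inv M (M p) = p"
      using M(2) by (simp add: bij_is_inj)
    ultimately show "y \<in> M ` (inv M ` K \<inter> int_points)"
      by (metis IntI image_eqI)
  qed
  ultimately show ?thesis
    by (meson finite_imageI finite_subset)
qed

section \<open>Eigenvalues of the Gabor multiplier\<close>

lemma in_L2_gabor_mult: "in_L2 g \<Longrightarrow> in_L2 (gabor_mult g K L f)"
  unfolding gabor_mult_def by (intro in_L2_linear_combination in_L2_tf_shift)

lemma L2_inner_gabor_mult_self:
  assumes "in_L2 g" "in_L2 f"
  shows "L2_inner (gabor_mult g K L f) f = (\<Sum>l\<in>K \<inter> L. complex_of_real ((cmod (STFT g f l))\<^sup>2))"
proof -
  have "L2_inner (gabor_mult g K L f) f = (\<Sum>l\<in>K \<inter> L. STFT g f l * L2_inner (tf_shift l g) f)"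
    unfolding gabor_mult_def using assms in_L2_tf_shift
    by (intro L2_inner_linear_combination_left)
  also have "\<dots> = (\<Sum>l\<in>K \<inter> L. STFT g f l * cnj (STFT g f l))"
    by (simp only: STFT_def L2_inner_commute[of "tf_shift _ g" f])
  finally show ?thesis
    by (simp only: complex_norm_square)
qed

lemma eigendecomp_eigenvalue:
  assumes "eigendecomp G lam h" "in_L2 (G (h j))"
  shows "L2_inner (G (h j)) (h j) = lam j"
proof -
  have orth: "L2_orthonormal h"
    using assms(1) by (simp add: eigendecomp_def L2_onb_imp_orthonormal)
  then have h: "in_L2 (h k)" and orth: "L2_inner (h j) (h k) = (if j = k then 1 else 0)" for k
    by (auto simp: L2_orthonormal_def)
  define D where "D t = G (h j) t - complex_of_real (lam j) * h j t" for t
  have "(\<Sum>k<n. complex_of_real (lam k) * L2_inner (h j) (h k) * h k t) = complex_of_real (lam j) * h j t"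
    if "n > j" for n t
  proof -
    have "(\<Sum>k<n. complex_of_real (lam k) * L2_inner (h j) (h k) * h k t)
        = (\<Sum>k<n. if k = j then complex_of_real (lam j) * h j t else 0)"
      by (intro sum.cong) (auto simp: orth)
    then show ?thesis
      using that by simp
  qed
  then have "eventually (\<lambda>n. L2_norm (\<lambda>t. G (h j) t
      - (\<Sum>k<n. complex_of_real (lam k) * L2_inner (h j) (h k) * h k t)) = L2_norm D) sequentially"
    unfolding D_def eventually_sequentially by (intro exI[of _ "Suc j"] allI impI) (simp add: Suc_le_eq)
  moreover have "(\<lambda>n. L2_norm (\<lambda>t. G (h j) t
      - (\<Sum>k<n. complex_of_real (lam k) * L2_inner (h j) (h k) * h k t))) \<longlonglongrightarrow> 0"
    using assms(1) h by (simp add: eigendecomp_def)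
  ultimately have "L2_norm D = 0"
    by (simp add: tendsto_cong LIMSEQ_const_iff)
  moreover have D: "in_L2 D"
    unfolding D_def using assms(2) h by (intro in_L2_diff in_L2_mult_left)
  ultimately have "L2_inner D (h j) = 0"
    by (rule L2_inner_eq_0_if_L2_norm_eq_0[rotated])
  moreover have "L2_inner D (h j) = L2_inner (G (h j)) (h j) - lam j"
    unfolding D_def using assms(2) h
    by (simp add: L2_inner_diff_left in_L2_mult_left L2_inner_mult_left orth)
  ultimately show ?thesis
    by simp
qed

lemma gabor_mult_eigenvalue:
  assumes "in_L2 g" "eigendecomp (gabor_mult g K L) lam h"
  shows "(\<Sum>l\<in>K \<inter> L. (cmod (STFT g (h j) l))\<^sup>2) = lam j"
proof -
  have "in_L2 (h j)"
    using assms(2) by (simp add: eigendecomp_def L2_onb_def)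
  then have "complex_of_real (\<Sum>l\<in>K \<inter> L. (cmod (STFT g (h j) l))\<^sup>2)
      = L2_inner (gabor_mult g K L (h j)) (h j)"
    by (simp only: of_real_sum L2_inner_gabor_mult_self[OF assms(1)])
  also have "\<dots> = lam j"
    using eigendecomp_eigenvalue[OF assms(2) in_L2_gabor_mult[OF assms(1)]] .
  finally show ?thesis
    by (simp only: of_real_eq_iff)
qed

section \<open>The accumulated spectrogram\<close>

lemma has_sum_sum:
  fixes f :: "'i \<Rightarrow> 'a \<Rightarrow> 'b::topological_comm_monoid_add"
  assumes "finite I" "\<And>i. i \<in> I \<Longrightarrow> (f i has_sum s i) A"
  shows "((\<lambda>x. \<Sum>i\<in>I. f i x) has_sum (\<Sum>i\<in>I. s i)) A"
  using assms by (induction I rule: finite_induct) (simp_all add: has_sum_add)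

lemma has_sum_abs_diff_indicator:
  fixes \<rho> :: "'a \<Rightarrow> real"
  assumes "(\<rho> has_sum s) L" "\<And>l. l \<in> L \<Longrightarrow> 0 \<le> \<rho> l" "\<And>l. l \<in> L \<Longrightarrow> \<rho> l \<le> 1"
    and "finite (S \<inter> L)"
  shows "((\<lambda>l. \<bar>\<rho> l - indicator S l\<bar>) has_sum (s + card (S \<inter> L) - 2 * (\<Sum>l\<in>S \<inter> L. \<rho> l))) L"
proof -
  have "((\<lambda>l. indicator S l * (1 - 2 * \<rho> l)) has_sum (\<Sum>l\<in>S \<inter> L. 1 - 2 * \<rho> l)) L"
    using assms(4) by (intro has_sum_finite_neutralI) (auto simp: indicator_def)
  with assms(1) have "((\<lambda>l. \<rho> l + indicator S l * (1 - 2 * \<rho> l))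
      has_sum (s + (\<Sum>l\<in>S \<inter> L. 1 - 2 * \<rho> l))) L"
    by (rule has_sum_add)
  moreover have "s + (\<Sum>l\<in>S \<inter> L. 1 - 2 * \<rho> l) = s + card (S \<inter> L) - 2 * (\<Sum>l\<in>S \<inter> L. \<rho> l)"
    by (simp add: sum_subtractf sum_distrib_left)
  moreover have "\<bar>\<rho> l - indicator S l\<bar> = \<rho> l + indicator S l * (1 - 2 * \<rho> l)" if "l \<in> L" for l
    using assms(2,3)[OF that] by (simp add: indicator_def)
  then have "((\<lambda>l. \<bar>\<rho> l - indicator S l\<bar>) has_sum c) L \<longleftrightarrow>
      ((\<lambda>l. \<rho> l + indicator S l * (1 - 2 * \<rho> l)) has_sum c) L" for c
    by (rule has_sum_cong)
  ultimately show ?thesis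
    by simp
qed

lemma STFT_orthonormal_bessel:
  assumes "in_L2 g" "L2_orthonormal h" "finite K"
  shows "(\<Sum>k\<in>K. (cmod (STFT g (h k) l))\<^sup>2) \<le> (L2_norm g)\<^sup>2"
proof -
  have "(\<Sum>k\<in>K. (cmod (STFT g (h k) l))\<^sup>2) = (\<Sum>k\<in>K. (cmod (L2_inner (tf_shift l g) (h k)))\<^sup>2)"
    by (simp add: STFT_def L2_inner_commute[of "h _"])
  also have "\<dots> \<le> (L2_norm (tf_shift l g))\<^sup>2"
    using assms by (intro bessel_inequality in_L2_tf_shift)
  finally show ?thesis
    using assms(1) by (simp add: L2_norm_tf_shift)
qed

lemma acc_spec_nonneg: "0 \<le> acc_spec g h N l"
  by (simp add: acc_spec_def sum_nonneg)

text \<open>No positivity of the norm of g is needed: if it vanishes, the accumulated spectrogram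
  is 0 because division by 0 yields 0.\<close>
lemma acc_spec_le_1:
  assumes "in_L2 g" "L2_orthonormal h"
  shows "acc_spec g h N l \<le> 1"
  using STFT_orthonormal_bessel[OF assms, of "{..<N}" l]
  by (simp add: acc_spec_def divide_le_eq_1)

lemma gabor_frame_L2_norm_pos:
  fixes g f :: "real^'d \<Rightarrow> complex"
  assumes "gabor_frame g L A B" "in_L2 g" "in_L2 f" "L2_norm f \<noteq> 0"
  shows "L2_norm g > 0"
proof (rule ccontr)
  assume "\<not> L2_norm g > 0"
  moreover have "0 \<le> L2_norm g"
    unfolding L2_norm_def by (intro real_sqrt_ge_zero integral_nonneg_AE) simp
  ultimately have "L2_norm (tf_shift l g) = 0" for l
    using assms(2) by (simp add: L2_norm_tf_shift)
  then have "STFT g f l = 0" for l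
    using assms(2) by (simp add: STFT_def L2_inner_commute[of f] L2_inner_eq_0_if_L2_norm_eq_0 in_L2_tf_shift)
  moreover have "A * (L2_norm f)\<^sup>2 \<le> (\<Sum>\<^sub>\<infinity>l\<in>L. (cmod (STFT g f l))\<^sup>2)"
    using assms(1,3) by (simp add: gabor_frame_def)
  ultimately have "A * (L2_norm f)\<^sup>2 \<le> 0"
    by simp
  moreover have "A > 0"
    using assms(1) by (simp add: gabor_frame_def)
  ultimately show False
    using assms(4) by (simp add: mult_le_0_iff)
qed

lemma has_sum_acc_spec:
  assumes "gabor_frame g L A B" "L2_orthonormal h"
  obtains s where "(acc_spec g h N has_sum s) L" "s \<le> N * B / (L2_norm g)\<^sup>2"
proof -
  define V where "V k = infsum (\<lambda>l. (cmod (STFT g (h k) l))\<^sup>2) L" for k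
  have "in_L2 (h k)" for k
    using assms(2) by (simp add: L2_orthonormal_def)
  then have "(\<lambda>l. (cmod (STFT g (h k) l))\<^sup>2) summable_on L \<and> V k \<le> B * (L2_norm (h k))\<^sup>2" for k
    using assms(1) by (simp add: V_def gabor_frame_def)
  then have "((\<lambda>l. (cmod (STFT g (h k) l))\<^sup>2) has_sum V k) L" and "V k \<le> B" for k
    by (simp_all add: V_def L2_orthonormal_norm[OF assms(2)])
  then have "(acc_spec g h N has_sum (1 / (L2_norm g)\<^sup>2 * (\<Sum>k<N. V k))) L"
    unfolding acc_spec_def[abs_def] by (intro has_sum_cmult_right has_sum_sum) auto
  moreover have "1 / (L2_norm g)\<^sup>2 * (\<Sum>k<N. V k) \<le> N * B / (L2_norm g)\<^sup>2"
    using sum_mono[of "{..<N}" V "\<lambda>_. B"] \<open>\<And>k. V k \<le> B\<close> by (simp add: divide_right_mono)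
  ultimately show ?thesis
    using that by blast
qed

lemma sum_acc_spec_gabor_mult:
  assumes "in_L2 g" "eigendecomp (gabor_mult g K L) lam h"
  shows "(\<Sum>l\<in>K \<inter> L. acc_spec g h N l) = (\<Sum>k<N. lam k) / (L2_norm g)\<^sup>2"
  unfolding acc_spec_def sum_distrib_left[symmetric]
  by (subst sum.swap) (simp add: gabor_mult_eigenvalue[OF assms] sum_divide_distrib)

lemma A_Om_mult_le:
  fixes B :: real
  assumes "B > 0"
  shows "real (A_Om g K L B) * B \<le> card (K \<inter> L) * (L2_norm g)\<^sup>2 + B"
proof -
  have "real (A_Om g K L B) = \<lceil>card (K \<inter> L) * (L2_norm g)\<^sup>2 / B\<rceil>"
    using assms by (simp add: A_Om_def)
  also have "\<dots> \<le> card (K \<inter> L) * (L2_norm g)\<^sup>2 / B + 1"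
    by linarith
  finally show ?thesis
    using assms by (simp add: field_simps)
qed

lemma has_sum_acc_spec_A_Om:
  assumes "gabor_frame g L A B" "L2_orthonormal h" "L2_norm g \<noteq> 0"
  obtains s where "(acc_spec g h (A_Om g K L B) has_sum s) L" "s \<le> card (K \<inter> L) + B / (L2_norm g)\<^sup>2"
proof -
  obtain s where s: "(acc_spec g h (A_Om g K L B) has_sum s) L" "s \<le> A_Om g K L B * B / (L2_norm g)\<^sup>2"
    using has_sum_acc_spec[OF assms(1,2)] .
  have "B > 0"
    using assms(1) by (simp add: gabor_frame_def)
  have "A_Om g K L B * B / (L2_norm g)\<^sup>2 \<le> (card (K \<inter> L) * (L2_norm g)\<^sup>2 + B) / (L2_norm g)\<^sup>2"
    using A_Om_mult_le[OF \<open>B > 0\<close>] by (intro divide_right_mono) auto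
  also have "\<dots> = card (K \<inter> L) + B / (L2_norm g)\<^sup>2"
    using assms(3) by (simp add: add_divide_distrib)
  finally show ?thesis
    using that s by simp
qed

theorem lemma3p1:
  fixes g :: "real^'d \<Rightarrow> complex"
    and L :: "((real^'d) \<times> (real^'d)) set"
    and Om :: "((real^'d) \<times> (real^'d)) set"
    and A B :: real
    and lam :: "nat \<Rightarrow> real"
    and h :: "nat \<Rightarrow> real^'d \<Rightarrow> complex"
  assumes "is_lattice L"
    and "in_L2 g"
    and "gabor_frame g L A B"
    and "compact Om"
    and "eigendecomp (gabor_mult g Om L) lam h"
  shows "(\<lambda>l. \<bar>acc_spec g h (A_Om g Om L B) l - indicator Om l\<bar>) summable_on L \<and>
    (\<Sum>\<^sub>\<infinity>l\<in>L. \<bar>acc_spec g h (A_Om g Om L B) l - indicator Om l\<bar>)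
      \<le> 2 / (L2_norm g)\<^sup>2 * (real (card (Om \<inter> L)) * (L2_norm g)\<^sup>2 - (\<Sum>k<A_Om g Om L B. lam k))
        + B / (L2_norm g)\<^sup>2"
proof -
  let ?N = "A_Om g Om L B" and ?c = "(L2_norm g)\<^sup>2" and ?S = "\<Sum>k<A_Om g Om L B. lam k"
  have orth: "L2_orthonormal h"
    using assms(5) by (simp add: eigendecomp_def L2_onb_imp_orthonormal)
  have "L2_norm g > 0"
    using gabor_frame_L2_norm_pos[OF assms(3,2), of "h 0"] orth
    by (simp add: L2_orthonormal_def L2_orthonormal_norm)
  then obtain s where s: "(acc_spec g h ?N has_sum s) L" "s \<le> card (Om \<inter> L) + B / ?c"
    using has_sum_acc_spec_A_Om[OF assms(3) orth] by auto
  have "((\<lambda>l. \<bar>acc_spec g h ?N l - indicator Om l\<bar>)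
      has_sum (s + card (Om \<inter> L) - 2 * (\<Sum>l\<in>Om \<inter> L. acc_spec g h ?N l))) L"
    using has_sum_abs_diff_indicator[OF s(1) acc_spec_nonneg acc_spec_le_1[OF assms(2) orth]
        finite_compact_inter_lattice[OF assms(1,4)]] .
  then have sum: "((\<lambda>l. \<bar>acc_spec g h ?N l - indicator Om l\<bar>)
      has_sum (s + card (Om \<inter> L) - 2 * (?S / ?c))) L"
    by (simp only: sum_acc_spec_gabor_mult[OF assms(2,5)])
  have "s + card (Om \<inter> L) - 2 * (?S / ?c) \<le> 2 / ?c * (card (Om \<inter> L) * ?c - ?S) + B / ?c"
    using s(2) \<open>L2_norm g > 0\<close> by (simp add: right_diff_distrib)
  then show ?thesis
    using has_sum_imp_summable[OF sum] infsumI[OF sum] by simp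
qed

end
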